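(* Consider the directed linear network with nodes indexed by $\mathbb{Z}$ and an ideal (lossless) channel in which node $k$ can only transmit to node $k+1$. Let $\{p_i\}_{i\ge 0}$ be a probability distribution on $\{0,1,2,\dots\}$ and suppose that, at every time slot $n$, every node $k$ independently (of all other nodes and all other time slots) broadcasts its current information about node $k-i$ with probability $p_i$. The ages evolve by $A_{j,j}(n)=0$ and, for $j\neq l$, $A_{j,l}(n+1)=\min\{A_{j,l}(n),\,A_{j-1,l}(n)\}+1$ if node $j-1$ broadcast its information about node $l$ at time $n$, and $A_{j,l}(n+1)=A_{j,l}(n)+1$ otherwise. Fix $i\ge 1$ and assume $p_0,\dots,p_{i-1}>0$. Then, for every $k$ and every finite initial configuration of ages, $A_{k+i,k}(n)$ converges in distribution as $n\to\infty$ to $A_i:=G_0+G_1+\dots+G_{i-1}$, where $G_0,\dots,G_{i-1}$ are independent and $G_j$ is geometric on $\{1,2,\dots\}$ with success probability $p_j$ (i.e. $\mathbb{P}(G_j=m)=p_j(1-p_j)^{m-1}$). In particular $$\mathbb{E}[A_i]=\sum_{j=0}^{i-1}\frac{1}{p_j},\qquad \mathrm{Var}(A_i)=\sum_{j=0}^{i-1}\frac{1-p_j}{p_j^2}.$$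
   Context: $A_{j,l}(n)$ denotes the age of information at node $j$ about node $l$ at time $n$: the difference between $n$ and the time stamp of the most recent sensor measurement of node $l$ that has reached node $j$ (possibly via relays). Time is slotted, $n=0,1,2,\dots$. *)

theory Defs
  imports "HOL-Probability.Probability"
begin

text \<open>Broadcast decisions: B n k = i means that at time slot n node k broadcasts
its current information about node k - i.\<close>

primrec age :: "(int \<Rightarrow> int \<Rightarrow> nat) \<Rightarrow> (nat \<Rightarrow> int \<Rightarrow> nat) \<Rightarrow> nat \<Rightarrow> int \<Rightarrow> int \<Rightarrow> nat" where
  "age A0 B 0 j l = (if j = l then 0 else A0 j l)"
| "age A0 B (Suc n) j l =
     (if j = l then 0
      else if int (B n (j - 1)) = (j - 1) - l
           then min (age A0 B n j l) (age A0 B n (j - 1) l) + 1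
           else age A0 B n j l + 1)"

definition geom1_pmf :: "real \<Rightarrow> nat pmf" where
  "geom1_pmf q = map_pmf Suc (geometric_pmf q)"

primrec sum_geom_pmf :: "nat pmf \<Rightarrow> nat \<Rightarrow> nat pmf" where
  "sum_geom_pmf p 0 = return_pmf 0"
| "sum_geom_pmf p (Suc m) =
     bind_pmf (sum_geom_pmf p m) (\<lambda>a. map_pmf (\<lambda>g. a + g) (geom1_pmf (pmf p m)))"

end

theory Submission
  imports Defs
begin

text \<open>For \<open>a > 0\<close> the age at node \<open>j\<close> about node \<open>l\<close> at time \<open>a + t\<close> is at most \<open>t\<close>
exactly when a measurement of \<open>l\<close> taken at time \<open>a\<close> or later has reached \<open>j\<close> by then. This
event depends only on the broadcasts in the slots \<open>a, \<dots>, a + t - 1\<close>, not on the initial ages.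
For \<open>j = l + x + 1\<close> it happens at time \<open>a + t + 1\<close> iff it already happened at time \<open>a + t\<close>,
or the hop into \<open>j\<close> fires in slot \<open>a + t\<close> (probability \<open>p\<^sub>x\<close>, independently of the past)
while the event for \<open>l + x\<close> holds. So its probability \<open>F\<^sub>x\<^sub>+\<^sub>1(t)\<close> obeys
\<open>F\<^sub>x\<^sub>+\<^sub>1(t + 1) = p\<^sub>x F\<^sub>x(t) + (1 - p\<^sub>x) F\<^sub>x\<^sub>+\<^sub>1(t)\<close>. The cdf of \<open>G\<^sub>0 + \<dots> + G\<^sub>x\<close> obeys the same
recursion, because a geometric variable either stops after one step or restarts one step
later. Hence the cdf of \<open>A\<^sub>k\<^sub>+\<^sub>i\<^sub>,\<^sub>k(n)\<close> at \<open>m\<close> equals that of \<open>A\<^sub>i\<close> for all \<open>n > m\<close>.\<close>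

lemma geom1_pmf_unfold:
  assumes "0 < q" "q \<le> 1"
  shows "geom1_pmf q =
    bernoulli_pmf q \<bind> (\<lambda>b. if b then return_pmf 1 else map_pmf Suc (geom1_pmf q))"
  unfolding geom1_pmf_def
  by (subst geometric_bind_pmf_unfold) (use assms in \<open>auto simp: map_bind_pmf intro!: bind_pmf_cong\<close>)

lemma sum_geom_pmf_Suc_unfold:
  assumes "0 < pmf p x"
  shows "sum_geom_pmf p (Suc x) = bernoulli_pmf (pmf p x) \<bind>
    (\<lambda>b. map_pmf Suc (if b then sum_geom_pmf p x else sum_geom_pmf p (Suc x)))"
proof -
  have "sum_geom_pmf p (Suc x) = sum_geom_pmf p x \<bind> (\<lambda>a. bernoulli_pmf (pmf p x) \<bind>
      (\<lambda>b. map_pmf ((+) a) (if b then return_pmf 1 else map_pmf Suc (geom1_pmf (pmf p x)))))"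
    using assms pmf_le_1
    by (simp only: sum_geom_pmf.simps, subst (1) geom1_pmf_unfold) (auto simp: map_bind_pmf)
  also have "\<dots> = bernoulli_pmf (pmf p x) \<bind>
    (\<lambda>b. map_pmf Suc (if b then sum_geom_pmf p x else sum_geom_pmf p (Suc x)))"
    by (subst bind_commute_pmf, rule bind_pmf_cong)
       (auto simp: map_bind_pmf pmf.map_comp o_def map_pmf_def bind_assoc_pmf bind_return_pmf)
  finally show ?thesis .
qed

lemma measure_bind_bernoulli_pmf:
  assumes "0 \<le> q" "q \<le> 1"
  shows "measure_pmf.prob (bernoulli_pmf q \<bind> f) A =
    q * measure_pmf.prob (f True) A + (1 - q) * measure_pmf.prob (f False) A"
proof -
  have "emeasure (measure_pmf (bernoulli_pmf q \<bind> f)) A =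
      ennreal (q * measure_pmf.prob (f True) A + (1 - q) * measure_pmf.prob (f False) A)"
    using assms unfolding emeasure_bind_pmf
    by (simp add: measure_pmf.emeasure_eq_measure ennreal_plus ennreal_mult mult.commute)
  moreover have "0 \<le> q * measure_pmf.prob (f True) A + (1 - q) * measure_pmf.prob (f False) A"
    using assms by simp
  ultimately show ?thesis
    by (simp only: measure_pmf.emeasure_eq_measure ennreal_inj measure_nonneg)
qed

lemma measure_sum_geom_pmf_Suc_atMost_Suc:
  assumes "0 < pmf p x"
  shows "measure_pmf.prob (sum_geom_pmf p (Suc x)) {..Suc t} =
    pmf p x * measure_pmf.prob (sum_geom_pmf p x) {..t}
    + (1 - pmf p x) * measure_pmf.prob (sum_geom_pmf p (Suc x)) {..t}"
  using assms pmf_le_1[of p x]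
  by (subst (1) sum_geom_pmf_Suc_unfold) (simp_all add: measure_bind_bernoulli_pmf vimage_def atMost_def)

lemma nn_integral_of_nat_add_pmf:
  fixes P Q :: "nat pmf"
  shows "(\<integral>\<^sup>+x. of_nat x \<partial>bind_pmf P (\<lambda>a. map_pmf ((+) a) Q)) =
    (\<integral>\<^sup>+x. of_nat x \<partial>P) + (\<integral>\<^sup>+x. of_nat x \<partial>Q)"
  by (simp add: nn_integral_add measure_pmf.emeasure_space_1)

lemma nn_integral_of_nat_sq_add_pmf:
  fixes P Q :: "nat pmf"
  shows "(\<integral>\<^sup>+x. of_nat x ^ 2 \<partial>bind_pmf P (\<lambda>a. map_pmf ((+) a) Q)) =
    (\<integral>\<^sup>+x. of_nat x ^ 2 \<partial>P) + 2 * (\<integral>\<^sup>+x. of_nat x \<partial>P) * (\<integral>\<^sup>+x. of_nat x \<partial>Q)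
    + (\<integral>\<^sup>+x. of_nat x ^ 2 \<partial>Q)"
  by (simp add: power2_sum nn_integral_add nn_integral_cmult nn_integral_multc
      measure_pmf.emeasure_space_1 mult.assoc)

lemma nn_integral_geometric_pmf_sums:
  assumes "0 < q" "q \<le> 1" and "(\<lambda>n. (1 - q) ^ n * q * f n) sums S" and "\<And>n. 0 \<le> f n"
  shows "(\<integral>\<^sup>+n. ennreal (f n) \<partial>geometric_pmf q) = ennreal S"
proof -
  have "(\<integral>\<^sup>+n. ennreal (f n) \<partial>geometric_pmf q) = (\<Sum>n. ennreal ((1 - q) ^ n * q * f n))"
    using assms
    by (simp add: nn_integral_measure_pmf nn_integral_count_space_nat ennreal_mult[symmetric])
  also have "\<dots> = ennreal S"
    using assms by (intro suminf_ennreal_eq) auto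
  finally show ?thesis .
qed

lemma sums_Suc_sq_times_power:
  fixes z :: real
  assumes "\<bar>z\<bar> < 1"
  shows "(\<lambda>n. real (Suc n) ^ 2 * z ^ n) sums ((1 + z) / (1 - z) ^ 3)"
proof -
  have "(\<lambda>n. of_nat n * w ^ n) sums (w / (1 - w) ^ 2)" if "norm w < 1" for w :: real
    using geometric_sums_times_n[OF that] by (simp add: mult.commute)
  moreover have "((\<lambda>w. w / (1 - w) ^ 2) has_field_derivative ((1 + z) / (1 - z) ^ 3)) (at z)"
    using assms by (auto intro!: derivative_eq_intros simp: divide_simps) algebra
  ultimately have "(\<lambda>n. diffs (\<lambda>n. of_nat n) n * z ^ n) sums ((1 + z) / (1 - z) ^ 3)"
    using assms by (intro termdiffs_sums_strong) auto
  then show ?thesis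
    by (simp add: diffs_def power2_eq_square)
qed

lemma nn_integral_of_nat_geom1_pmf:
  assumes "0 < q" "q \<le> 1"
  shows "(\<integral>\<^sup>+g. of_nat g \<partial>geom1_pmf q) = ennreal (1 / q)"
proof -
  have "(\<lambda>n. (1 - q) ^ n * q * real (Suc n)) sums (q * ((1 - q) / q ^ 2) + q * (1 / q))"
    using sums_add[OF sums_mult[OF geometric_sums_times_n[of "1 - q"]]
        sums_mult[OF geometric_sums[of "1 - q"]], of q q] assms
    by (simp add: algebra_simps)
  also have "q * ((1 - q) / q ^ 2) + q * (1 / q) = 1 / q"
    using assms by (simp add: field_simps power2_eq_square)
  finally show ?thesis
    using nn_integral_geometric_pmf_sums[OF assms, of "\<lambda>n. real (Suc n)"]
    by (simp add: geom1_pmf_def ennreal_of_nat_eq_real_of_nat)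
qed

lemma nn_integral_of_nat_sq_geom1_pmf:
  assumes "0 < q" "q \<le> 1"
  shows "(\<integral>\<^sup>+g. of_nat g ^ 2 \<partial>geom1_pmf q) = ennreal ((2 - q) / q ^ 2)"
proof -
  have "(\<lambda>n. (1 - q) ^ n * q * real (Suc n) ^ 2) sums (q * ((1 + (1 - q)) / (1 - (1 - q)) ^ 3))"
    using sums_mult[OF sums_Suc_sq_times_power[of "1 - q"], of q] assms
    by (simp add: algebra_simps)
  also have "q * ((1 + (1 - q)) / (1 - (1 - q)) ^ 3) = (2 - q) / q ^ 2"
    using assms by (simp add: field_simps power2_eq_square power3_eq_cube)
  finally show ?thesis
    using nn_integral_geometric_pmf_sums[OF assms, of "\<lambda>n. real (Suc n) ^ 2"]
    by (simp add: geom1_pmf_def ennreal_of_nat_eq_real_of_nat ennreal_power)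
qed

lemma nn_integral_of_nat_sum_geom_pmf:
  assumes "\<And>j. j < x \<Longrightarrow> 0 < pmf p j"
  shows "(\<integral>\<^sup>+a. of_nat a \<partial>sum_geom_pmf p x) = ennreal (\<Sum>j<x. 1 / pmf p j)"
  using assms
proof (induction x)
  case (Suc x)
  then have "0 < pmf p x" by simp
  with Suc show ?case
    unfolding sum_geom_pmf.simps nn_integral_of_nat_add_pmf
    by (simp add: nn_integral_of_nat_geom1_pmf pmf_le_1 ennreal_plus sum_nonneg)
qed simp

lemma nn_integral_of_nat_sq_sum_geom_pmf:
  assumes "\<And>j. j < x \<Longrightarrow> 0 < pmf p j"
  shows "(\<integral>\<^sup>+a. of_nat a ^ 2 \<partial>sum_geom_pmf p x) =
    ennreal ((\<Sum>j<x. (1 - pmf p j) / pmf p j ^ 2) + (\<Sum>j<x. 1 / pmf p j) ^ 2)"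
  using assms
proof (induction x)
  case (Suc x)
  let ?q = "pmf p x" and ?m = "\<Sum>j<x. 1 / pmf p j"
    and ?v = "\<Sum>j<x. (1 - pmf p j) / pmf p j ^ 2"
  have q: "0 < ?q" "?q \<le> 1"
    using Suc.prems pmf_le_1 by auto
  have nonneg: "0 \<le> ?m" "0 \<le> ?v"
    using pmf_le_1 by (auto intro!: sum_nonneg divide_nonneg_nonneg)
  have "(\<integral>\<^sup>+a. of_nat a ^ 2 \<partial>sum_geom_pmf p (Suc x)) =
      ennreal (?v + ?m ^ 2) + 2 * ennreal ?m * ennreal (1 / ?q) + ennreal ((2 - ?q) / ?q ^ 2)"
    using Suc q unfolding sum_geom_pmf.simps nn_integral_of_nat_sq_add_pmf
    by (simp add: nn_integral_of_nat_sum_geom_pmf nn_integral_of_nat_geom1_pmf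
        nn_integral_of_nat_sq_geom1_pmf)
  also have "\<dots> = ennreal ((?v + ?m ^ 2) + 2 * ?m * (1 / ?q) + (2 - ?q) / ?q ^ 2)"
    using q nonneg by (simp flip: ennreal_numeral ennreal_mult ennreal_plus)
  also have "(?v + ?m ^ 2) + 2 * ?m * (1 / ?q) + (2 - ?q) / ?q ^ 2
      = (?v + (1 - ?q) / ?q ^ 2) + (?m + 1 / ?q) ^ 2"
    using q by (simp add: field_simps power2_eq_square)
  finally show ?case
    by simp
qed simp

lemma expectation_sum_geom_pmf:
  assumes "\<And>j. j < x \<Longrightarrow> 0 < pmf p j"
  shows "measure_pmf.expectation (sum_geom_pmf p x) real = (\<Sum>j<x. 1 / pmf p j)"
  using nn_integral_of_nat_sum_geom_pmf[OF assms]
  by (subst integral_eq_nn_integral) (auto simp: ennreal_of_nat_eq_real_of_nat sum_nonneg)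

lemma variance_sum_geom_pmf:
  assumes "\<And>j. j < x \<Longrightarrow> 0 < pmf p j"
  shows "measure_pmf.variance (sum_geom_pmf p x) real = (\<Sum>j<x. (1 - pmf p j) / pmf p j ^ 2)"
proof -
  let ?m = "\<Sum>j<x. 1 / pmf p j" and ?v = "\<Sum>j<x. (1 - pmf p j) / pmf p j ^ 2"
  have nonneg: "0 \<le> ?m" "0 \<le> ?v"
    using pmf_le_1 by (auto intro!: sum_nonneg divide_nonneg_nonneg)
  note m1 = nn_integral_of_nat_sum_geom_pmf[of x p, OF assms]
  note m2 = nn_integral_of_nat_sq_sum_geom_pmf[of x p, OF assms]
  have "integrable (sum_geom_pmf p x) real"
    using m1 by (intro integrableI_nn_integral_finite) (auto simp: ennreal_of_nat_eq_real_of_nat)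
  moreover have "integrable (sum_geom_pmf p x) (\<lambda>a. real a ^ 2)"
    using m2 by (intro integrableI_nn_integral_finite)
      (auto simp: ennreal_of_nat_eq_real_of_nat ennreal_power)
  moreover have "measure_pmf.expectation (sum_geom_pmf p x) (\<lambda>a. real a ^ 2) = ?v + ?m ^ 2"
    using m2 nonneg
    by (subst integral_eq_nn_integral)
       (auto simp: ennreal_of_nat_eq_real_of_nat ennreal_power simp del: ennreal_plus)
  ultimately show ?thesis
    by (subst measure_pmf.variance_eq) (simp_all add: expectation_sum_geom_pmf[of x p, OF assms])
qed

lemma measurable_age:
  assumes [measurable]: "\<And>n j. B n j \<in> measurable M (count_space UNIV)"
  shows "(\<lambda>\<omega>. age A0 (\<lambda>t x. B t x \<omega>) n j l) \<in> measurable M (count_space UNIV)"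
  by (induction n arbitrary: j) simp_all

text \<open>\<open>informed_since B l a t j\<close>: at time \<open>a + t\<close> node \<open>j\<close> holds a measurement of node \<open>l\<close>
taken at time \<open>a\<close> or later.\<close>

primrec informed_since :: "(nat \<Rightarrow> int \<Rightarrow> nat) \<Rightarrow> int \<Rightarrow> nat \<Rightarrow> nat \<Rightarrow> int \<Rightarrow> bool" where
  "informed_since B l a 0 j \<longleftrightarrow> j = l"
| "informed_since B l a (Suc t) j \<longleftrightarrow> j = l \<or> informed_since B l a t j
     \<or> (int (B (a + t) (j - 1)) = j - 1 - l \<and> informed_since B l a t (j - 1))"

lemma age_le_iff_informed_since:
  assumes "0 < a"
  shows "age A0 B (a + t) j l \<le> t \<longleftrightarrow> informed_since B l a t j"
proof (induction t arbitrary: j)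
  case 0
  from assms obtain a' where "a = Suc a'" by (cases a) auto
  then show ?case by simp
next
  case (Suc t)
  show ?case
    unfolding add_Suc_right age.simps(2) informed_since.simps(2)
    using Suc.IH[of j] Suc.IH[of "j - 1"] by auto
qed

lemma informed_since_pred_node:
  "l \<le> j \<Longrightarrow> informed_since B l a t (j + 1) \<Longrightarrow> informed_since B l a t j"
  by (induction t arbitrary: j) auto

lemma (in prob_space) weak_conv_m_of_nat_eventually_cdf:
  fixes X :: "nat \<Rightarrow> 'a \<Rightarrow> nat" and P :: "nat pmf"
  assumes measurable_X: "\<And>n. X n \<in> measurable M (count_space UNIV)"
    and cdf_X: "\<And>m. eventually
      (\<lambda>n. prob {\<omega> \<in> space M. X n \<omega> \<le> m} = measure_pmf.prob P {..m}) sequentially"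
  shows "weak_conv_m (\<lambda>n. distr M borel (\<lambda>\<omega>. real (X n \<omega>))) (distr (measure_pmf P) borel real)"
  unfolding weak_conv_m_def weak_conv_def
proof (intro allI impI)
  fix y :: real
  have measurable_real_X: "(\<lambda>\<omega>. real (X n \<omega>)) \<in> borel_measurable M" for n
    by (rule measurable_compose[OF measurable_X]) simp
  have cdf_X_eq: "cdf (distr M borel (\<lambda>\<omega>. real (X n \<omega>))) y
      = prob {\<omega> \<in> space M. real (X n \<omega>) \<le> y}" for n
    unfolding cdf_def
    by (subst measure_distr[OF measurable_real_X]) (auto intro!: arg_cong[where f = prob])
  have cdf_P_eq: "cdf (distr (measure_pmf P) borel real) y = measure_pmf.prob P {n. real n \<le> y}"
    unfolding cdf_def by (subst measure_distr) (auto intro: arg_cong[where f = "measure _"])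
  show "(\<lambda>n. cdf (distr M borel (\<lambda>\<omega>. real (X n \<omega>))) y)
      \<longlonglongrightarrow> cdf (distr (measure_pmf P) borel real) y"
  proof (cases "y < 0")
    case True
    then show ?thesis
      unfolding cdf_X_eq cdf_P_eq by (simp add: not_le[symmetric])
  next
    case False
    define m where "m = nat \<lfloor>y\<rfloor>"
    have le_y_iff: "real n \<le> y \<longleftrightarrow> n \<le> m" for n
      unfolding m_def using False by linarith
    show ?thesis
      unfolding cdf_X_eq cdf_P_eq le_y_iff atMost_def[symmetric]
      using cdf_X[of m] by (rule tendsto_eventually[OF eventually_mono]) simp
  qed
qed

locale iid_broadcasts = prob_space M for M :: "'a measure" +
  fixes p :: "nat pmf" and B :: "nat \<Rightarrow> int \<Rightarrow> 'a \<Rightarrow> nat"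
  assumes measurable_B: "\<And>n j. B n j \<in> measurable M (count_space UNIV)"
    and indep_B: "indep_vars (\<lambda>_. count_space UNIV) (\<lambda>(n, j). B n j) UNIV"
    and distr_B: "\<And>n j. distr M (count_space UNIV) (B n j) = measure_pmf p"
begin

definition broadcast_events :: "nat \<times> int \<Rightarrow> 'a set set" where
  "broadcast_events = (\<lambda>(n, j). range (\<lambda>A. B n j -` A \<inter> space M))"

definition past :: "nat \<Rightarrow> 'a set set" where
  "past T = sigma_sets (space M) (\<Union>i\<in>{..<T} \<times> UNIV. broadcast_events i)"

definition informed_event :: "int \<Rightarrow> nat \<Rightarrow> nat \<Rightarrow> int \<Rightarrow> 'a set" where
  "informed_event l a t j = {\<omega> \<in> space M. informed_since (\<lambda>s y. B s y \<omega>) l a t j}"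

lemma sigma_algebra_past: "sigma_algebra (space M) (past T)"
  unfolding past_def by (rule sigma_algebra_sigma_sets) (auto simp: broadcast_events_def)

lemma past_subset_events: "past T \<subseteq> events"
  unfolding past_def
  by (rule sets.sigma_sets_subset)
    (auto simp: broadcast_events_def intro: measurable_sets[OF measurable_B])

lemma B_event_in_broadcast_events: "{\<omega> \<in> space M. P (B n j \<omega>)} \<in> broadcast_events (n, j)"
  unfolding broadcast_events_def by (auto intro!: image_eqI[of _ _ "{v. P v}"])

lemma informed_event_in_past: "a + t \<le> T \<Longrightarrow> informed_event l a t j \<in> past T"
proof (induction t arbitrary: j)
  case 0
  interpret sigma_algebra "space M" "past T" by (rule sigma_algebra_past)
  show ?case by (cases "j = l") (auto simp: informed_event_def)
next
  case (Suc t)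
  interpret sigma_algebra "space M" "past T" by (rule sigma_algebra_past)
  have "{\<omega> \<in> space M. int (B (a + t) (j - 1) \<omega>) = j - 1 - l} \<in> past T"
    unfolding past_def using Suc.prems
    by (intro sigma_sets.Basic UN_I[of "(a + t, j - 1)"] B_event_in_broadcast_events) auto
  moreover have "informed_event l a (Suc t) j = (if j = l then space M else informed_event l a t j
      \<union> ({\<omega> \<in> space M. int (B (a + t) (j - 1) \<omega>) = j - 1 - l} \<inter> informed_event l a t (j - 1)))"
    by (auto simp: informed_event_def)
  ultimately show ?case
    using Suc by auto
qed

lemma prob_B_eq_pmf: "prob {\<omega> \<in> space M. B n j \<omega> = c} = pmf p c"
proof -
  have "prob {\<omega> \<in> space M. B n j \<omega> = c} = measure (distr M (count_space UNIV) (B n j)) {c}"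
    by (subst measure_distr[OF measurable_B]) (auto intro: arg_cong[where f = prob])
  then show ?thesis
    by (simp add: distr_B measure_pmf_single)
qed

lemma prob_B_eq_Int_past:
  assumes "D \<in> past T"
  shows "prob ({\<omega> \<in> space M. B T j \<omega> = c} \<inter> D) = pmf p c * prob D"
proof -
  define I where "I = (\<lambda>b. if b then {..<T} \<times> UNIV else {(T, j)})"
  define A where "A = (\<lambda>b. if b then D else {\<omega> \<in> space M. B T j \<omega> = c})"
  have "indep_sets broadcast_events UNIV"
    using indep_B unfolding indep_vars_def2 broadcast_events_def
    by (simp add: full_SetCompr_eq case_prod_unfold)
  then have "indep_sets broadcast_events (\<Union>b. I b)"
    by (rule indep_sets_mono_index[rotated]) auto
  moreover have "Int_stable (broadcast_events i)" for i
  proof (rule Int_stableI, clarsimp simp: broadcast_events_def case_prod_unfold)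
    fix A A'
    show "B (fst i) (snd i) -` A \<inter> space M \<inter> (B (fst i) (snd i) -` A' \<inter> space M)
        \<in> range (\<lambda>A. B (fst i) (snd i) -` A \<inter> space M)"
      by (rule range_eqI[of _ _ "A \<inter> A'"]) auto
  qed
  ultimately have "indep_sets (\<lambda>b. sigma_sets (space M) (\<Union>i\<in>I b. broadcast_events i)) UNIV"
    by (intro indep_sets_collect_sigma) (auto simp: disjoint_family_on_def I_def)
  moreover have "A b \<in> sigma_sets (space M) (\<Union>i\<in>I b. broadcast_events i)" for b
    using assms B_event_in_broadcast_events[of "\<lambda>v. v = c" T j]
    by (cases b) (auto simp: A_def I_def past_def split_def)
  ultimately have "prob (\<Inter>b. A b) = (\<Prod>b\<in>UNIV. prob (A b))"
    by (intro indep_setsD) auto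
  then show ?thesis
    by (simp add: A_def UNIV_bool prob_B_eq_pmf Int_commute)
qed

lemma prob_informed_event:
  assumes "\<And>j. j < x \<Longrightarrow> 0 < pmf p j"
  shows "prob (informed_event l a t (l + int x)) = measure_pmf.prob (sum_geom_pmf p x) {..t}"
  using assms
proof (induction t arbitrary: x)
  case 0
  then show ?case
    by (cases x) (auto simp: informed_event_def prob_space measure_pmf_zero_iff geom1_pmf_def)
next
  case (Suc t)
  show ?case
  proof (cases x)
    case 0
    then show ?thesis by (simp add: informed_event_def prob_space)
  next
    case (Suc y)
    let ?E = "informed_event l a t"
      and ?hop = "{\<omega> \<in> space M. B (a + t) (l + int y) \<omega> = y}"
    have x_eq: "l + int x = l + int y + 1"
      using Suc by simp
    have past: "?E j \<in> past (a + t)" for j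
      by (rule informed_event_in_past) simp
    then have events: "?E j \<in> events" for j
      using past_subset_events by blast
    have sub: "?E (l + int x) \<subseteq> ?E (l + int y)"
      unfolding x_eq informed_event_def using informed_since_pred_node[of l "l + int y"] by auto
    have "informed_event l a (Suc t) (l + int x)
        = ?E (l + int x) \<union> (?hop \<inter> (?E (l + int y) - ?E (l + int x)))"
      unfolding x_eq by (auto simp: informed_event_def)
    then have "prob (informed_event l a (Suc t) (l + int x))
        = prob (?E (l + int x)) + prob (?hop \<inter> (?E (l + int y) - ?E (l + int x)))"
      using events measurable_sets[OF measurable_B, of "{y}"]
      by (simp add: finite_measure_Union vimage_def Int_def conj_commute)
    also have "prob (?hop \<inter> (?E (l + int y) - ?E (l + int x)))
        = pmf p y * (prob (?E (l + int y)) - prob (?E (l + int x)))"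
    proof -
      have "?E (l + int y) - ?E (l + int x) \<in> past (a + t)"
        using sigma_algebra_past past
        by (intro ring_of_sets.Diff algebra.axioms sigma_algebra.axioms) auto
      then show ?thesis
        by (simp add: prob_B_eq_Int_past finite_measure_Diff[OF events events sub])
    qed
    finally show ?thesis
      using Suc.IH[of x] Suc.IH[of y] Suc.prems measure_sum_geom_pmf_Suc_atMost_Suc[of p y t]
        \<open>x = Suc y\<close>
      by (simp add: algebra_simps)
  qed
qed

lemma weak_conv_age:
  assumes "\<And>j. j < i \<Longrightarrow> 0 < pmf p j"
  shows "weak_conv_m (\<lambda>n. distr M borel (\<lambda>\<omega>. real (age A0 (\<lambda>t x. B t x \<omega>) n (k + int i) k)))
    (distr (measure_pmf (sum_geom_pmf p i)) borel real)"
proof (rule weak_conv_m_of_nat_eventually_cdf)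
  show "(\<lambda>\<omega>. age A0 (\<lambda>t x. B t x \<omega>) n (k + int i) k) \<in> measurable M (count_space UNIV)" for n
    by (rule measurable_age[OF measurable_B])
  fix m :: nat
  have "prob {\<omega> \<in> space M. age A0 (\<lambda>t x. B t x \<omega>) n (k + int i) k \<le> m}
      = measure_pmf.prob (sum_geom_pmf p i) {..m}" if "m < n" for n
  proof -
    have "age A0 C n j l \<le> m \<longleftrightarrow> informed_since C l (n - m) m j" for C j l
      using age_le_iff_informed_since[of "n - m" A0 C m j l] that by simp
    then have "{\<omega> \<in> space M. age A0 (\<lambda>t x. B t x \<omega>) n (k + int i) k \<le> m}
        = informed_event k (n - m) m (k + int i)"
      by (simp add: informed_event_def)
    then show ?thesis
      by (simp add: prob_informed_event assms)
  qed
  then show "eventually (\<lambda>n. prob {\<omega> \<in> space M. age A0 (\<lambda>t x. B t x \<omega>) n (k + int i) k \<le> m}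
      = measure_pmf.prob (sum_geom_pmf p i) {..m}) sequentially"
    unfolding eventually_sequentially by (intro exI[of _ "Suc m"]) auto
qed

end

theorem mainTheorem1:
  fixes M :: "'a measure" and p :: "nat pmf" and B :: "nat \<Rightarrow> int \<Rightarrow> 'a \<Rightarrow> nat"
    and A0 :: "int \<Rightarrow> int \<Rightarrow> nat" and i :: nat and k :: int
  assumes "prob_space M"
    and "\<And>n j. B n j \<in> measurable M (count_space UNIV)"
    and "prob_space.indep_vars M (\<lambda>_. count_space UNIV) (\<lambda>(n, j). B n j) UNIV"
    and "\<And>n j. distr M (count_space UNIV) (B n j) = measure_pmf p"
    and "i \<ge> 1"
    and "\<And>j. j < i \<Longrightarrow> pmf p j > 0"
  shows "weak_conv_m (\<lambda>n. distr M borel (\<lambda>\<omega>. real (age A0 (\<lambda>t x. B t x \<omega>) n (k + int i) k)))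
                     (distr (measure_pmf (sum_geom_pmf p i)) borel real)
      \<and> measure_pmf.expectation (sum_geom_pmf p i) real = (\<Sum>j<i. 1 / pmf p j)
      \<and> measure_pmf.variance (sum_geom_pmf p i) real = (\<Sum>j<i. (1 - pmf p j) / (pmf p j)^2)"
proof -
  interpret iid_broadcasts M p B
    using assms(1-4) by (simp add: iid_broadcasts_def iid_broadcasts_axioms_def)
  show ?thesis
    using weak_conv_age[OF assms(6)] expectation_sum_geom_pmf[of i p, OF assms(6)]
      variance_sum_geom_pmf[of i p, OF assms(6)]
    by blast
qed

end
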